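(* Let $\mathcal{V}$ be the complex vector space spanned by $\phi_k(x)=(x\frac{d}{dx})^k\big(\frac{1}{1-x}\big)$, $k\in\mathbb{N}=\{0,1,2,\dots\}$. If a nonzero $f\in\mathcal{V}$ is an eigenfunction of $U_p$ for some integer $p\ge2$, then $f$ is an eigenfunction of $U_q$ for every integer $q\ge2$.
   Context: For a power series $f(x)=\sum_{n\ge0}a_nx^n$ (in particular the Taylor expansion at $0$ of a rational function regular at $0$) and a positive integer $q$, $U_qf(x)=\sum_{n\ge0}a_{qn}x^n$. *)

theory Defs
  imports "HOL-Computational_Algebra.Formal_Power_Series"
begin

definition euler_op :: "complex fps \<Rightarrow> complex fps" where
  "euler_op f = fps_X * fps_deriv f"

text \<open>phi k = (x d/dx)^k (1/(1-x)), as a formal power series (Taylor expansion at 0).\<close>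
definition phi :: "nat \<Rightarrow> complex fps" where
  "phi k = (euler_op ^^ k) (inverse (1 - fps_X))"

definition Vspace :: "complex fps set" where
  "Vspace = {f. \<exists>S c. finite S \<and> f = (\<Sum>k\<in>S. fps_const (c k) * phi k)}"

definition Uop :: "nat \<Rightarrow> complex fps \<Rightarrow> complex fps" where
  "Uop q f = Abs_fps (\<lambda>n. fps_nth f (q * n))"

definition eigenfunction :: "nat \<Rightarrow> complex fps \<Rightarrow> bool" where
  "eigenfunction q f \<longleftrightarrow> f \<noteq> 0 \<and> (\<exists>c::complex. Uop q f = fps_const c * f)"

end

theory Submission
  imports Defs "HOL-Computational_Algebra.Polynomial"
begin

text \<open>
  The n-th coefficient of phi k is n^k, so an element of the span has coefficients P(n) for
  a polynomial P, and U_q acts diagonally on the phi k with eigenvalue q^k. Because a polynomial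
  is determined by its values at the natural numbers, the phi k are linearly independent, so
  U_p f = \<mu> f forces p^k = \<mu> for every k occurring in f. As p \<ge> 2, only one k = d can occur;
  f is then a multiple of phi d, an eigenfunction of every U_q with eigenvalue q^d.
\<close>

lemma phi_nth: "fps_nth (phi k) n = of_nat n ^ k"
proof (induction k arbitrary: n)
  case 0
  then show ?case by (simp add: phi_def fps_inverse_one_minus_fps_X)
next
  case (Suc k)
  have "phi (Suc k) = euler_op (phi k)" by (simp add: phi_def)
  with Suc show ?case by (cases n) (simp_all add: euler_op_def)
qed

lemma sum_phi_nth:
  "fps_nth (\<Sum>k\<in>S. fps_const (c k) * phi k) n = (\<Sum>k\<in>S. c k * of_nat n ^ k)"
  by (simp add: fps_sum_nth phi_nth)

lemma Uop_sum_phi: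
  "Uop q (\<Sum>k\<in>S. fps_const (c k) * phi k) = (\<Sum>k\<in>S. fps_const (c k * of_nat q ^ k) * phi k)"
  by (rule fps_ext) (simp add: Uop_def sum_phi_nth power_mult_distrib mult.assoc)

lemma poly_eq_0_if_zero_on_nats:
  fixes P :: "'a::{comm_ring_1,ring_no_zero_divisors,ring_char_0} poly"
  assumes "\<And>n::nat. poly P (of_nat n) = 0"
  shows "P = 0"
proof (rule ccontr)
  assume "P \<noteq> 0"
  then have "finite {x. poly P x = 0}" by (rule poly_roots_finite)
  moreover have "range (of_nat :: nat \<Rightarrow> 'a) \<subseteq> {x. poly P x = 0}"
    using assms by auto
  moreover have "infinite (range (of_nat :: nat \<Rightarrow> 'a))"
    using range_inj_infinite inj_of_nat by blast
  ultimately show False using finite_subset by blast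
qed

lemma phi_linear_independent:
  assumes "finite S" and "(\<Sum>k\<in>S. fps_const (b k) * phi k) = 0" and "k \<in> S"
  shows "b k = 0"
proof -
  define P where "P = (\<Sum>k\<in>S. monom (b k) k)"
  have "poly P (of_nat n) = fps_nth (\<Sum>k\<in>S. fps_const (b k) * phi k) n" for n
    by (simp add: P_def poly_sum poly_monom sum_phi_nth)
  then have "P = 0"
    using assms(2) by (intro poly_eq_0_if_zero_on_nats) simp
  moreover have "coeff P k = b k"
    using assms(1,3) by (simp add: P_def coeff_sum coeff_monom)
  ultimately show ?thesis by simp
qed

lemma Uop_eigenvalue_of_sum_phi:
  assumes "finite S"
    and "Uop p (\<Sum>k\<in>S. fps_const (c k) * phi k) = fps_const \<mu> * (\<Sum>k\<in>S. fps_const (c k) * phi k)"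
    and "k \<in> S" and "c k \<noteq> 0"
  shows "of_nat p ^ k = \<mu>"
proof -
  have "(\<Sum>k\<in>S. fps_const (c k * (of_nat p ^ k - \<mu>)) * phi k)
      = Uop p (\<Sum>k\<in>S. fps_const (c k) * phi k) - fps_const \<mu> * (\<Sum>k\<in>S. fps_const (c k) * phi k)"
    unfolding Uop_sum_phi sum_distrib_left sum_subtractf[symmetric]
    by (intro sum.cong refl fps_ext) (simp add: algebra_simps)
  also have "\<dots> = 0" using assms(2) by simp
  finally have "c k * (of_nat p ^ k - \<mu>) = 0"
    by (rule phi_linear_independent[OF assms(1) _ assms(3)])
  with assms(4) show ?thesis by simp
qed

lemma Uop_exponent_unique_of_sum_phi:
  assumes "finite S" and "p \<ge> 2"
    and "Uop p (\<Sum>k\<in>S. fps_const (c k) * phi k) = fps_const \<mu> * (\<Sum>k\<in>S. fps_const (c k) * phi k)"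
    and "j \<in> S" "c j \<noteq> 0" and "k \<in> S" "c k \<noteq> 0"
  shows "j = k"
proof -
  have "of_nat p ^ j = (of_nat p ^ k :: complex)"
    using Uop_eigenvalue_of_sum_phi[OF assms(1,3)] assms(4-7) by simp
  then have "p ^ j = p ^ k" by (metis of_nat_eq_iff of_nat_power)
  with assms(2) show ?thesis by (simp add: power_inject_exp)
qed

lemma Uop_sum_phi_single_exponent:
  assumes "\<And>k. k \<in> S \<Longrightarrow> c k \<noteq> 0 \<Longrightarrow> k = d"
  shows "Uop q (\<Sum>k\<in>S. fps_const (c k) * phi k) = fps_const (of_nat q ^ d) * (\<Sum>k\<in>S. fps_const (c k) * phi k)"
  unfolding Uop_sum_phi sum_distrib_left
proof (intro sum.cong refl)
  fix k assume "k \<in> S"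
  show "fps_const (c k * of_nat q ^ k) * phi k = fps_const (of_nat q ^ d) * (fps_const (c k) * phi k)"
    using assms[OF \<open>k \<in> S\<close>] by (cases "c k = 0") (auto intro: fps_ext)
qed

theorem mainTheorem16:
  fixes f :: "complex fps" and p :: nat
  assumes "f \<in> Vspace" and "f \<noteq> 0" and "p \<ge> 2" and "eigenfunction p f"
  shows "\<forall>q::nat. q \<ge> 2 \<longrightarrow> eigenfunction q f"
proof -
  obtain S c where S: "finite S" and f: "f = (\<Sum>k\<in>S. fps_const (c k) * phi k)"
    using assms(1) unfolding Vspace_def by blast
  obtain \<mu> where \<mu>: "Uop p f = fps_const \<mu> * f"
    using assms(4) unfolding eigenfunction_def by blast
  have "\<exists>d\<in>S. c d \<noteq> 0"
  proof (rule ccontr)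
    assume "\<not> (\<exists>d\<in>S. c d \<noteq> 0)"
    then have "f = 0" unfolding f by (intro sum.neutral) auto
    with assms(2) show False by contradiction
  qed
  then obtain d where d: "d \<in> S" "c d \<noteq> 0" by blast
  have "Uop q f = fps_const (of_nat q ^ d) * f" for q
    unfolding f
    by (rule Uop_sum_phi_single_exponent[OF Uop_exponent_unique_of_sum_phi[OF S assms(3) \<mu>[unfolded f] _ _ d]])
  with assms(2) show ?thesis
    unfolding eigenfunction_def by blast
qed

end
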